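(* Let $\nu\ge0$, $\epsilon\in\{0,1\}$, $\zeta$ real with $1+\zeta\nu^2\neq0$. For every smooth solution $U(X,T)$ of $$-2\nu^2U_XU_{XX}+3\epsilon U_XU-\nu^2U_{XXX}U+\tfrac23U_{XXX}-\tfrac23\nu^{5/2}U_{XXX}+\epsilon U_T-\nu^2U_{XXT}=0,$$ the Pfaffian system for $\gamma(X,T)$ $$-\gamma_X=\frac{3}{4(1+\zeta\nu^2)}\gamma^2-\Big(\nu^2U_{XX}-\epsilon U+\tfrac13\epsilon(\zeta+\sqrt\nu)\Big),$$ $$-\gamma_T=\frac{1}{2(1+\zeta\nu^2)}\Big(-\tfrac32U-\zeta-\sqrt\nu\Big)\gamma^2+U_X\gamma+U(\nu^2U_{XX}-\epsilon U)+\tfrac23(\nu^{5/2}-1)U_{XX}-\tfrac13\epsilon(\zeta+\sqrt\nu)U+\tfrac29\epsilon(\zeta^2+2\sqrt\nu\zeta+\nu)$$ is completely integrable; i.e. $\gamma$ is a quadratic pseudo-potential of this equation.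
   Context: A real function $\Gamma$ is a pseudo-potential of an equation if there are smooth functions $f,g$ of $\Gamma$, the independent variables, $U$ and finitely many derivatives of $U$ such that $\Omega_\Gamma=d\Gamma-(f\,dX+g\,dT)$ satisfies $d\Omega_\Gamma\equiv0\bmod\Omega_\Gamma$ on every solution; it is quadratic if $f,g$ are polynomials of degree at most two in $\Gamma$. *)

theory Defs
  imports "HOL-Analysis.Analysis"
begin

definition pdX :: "(real \<Rightarrow> real \<Rightarrow> real) \<Rightarrow> real \<Rightarrow> real \<Rightarrow> real" where
  "pdX u = (\<lambda>x t. deriv (\<lambda>x'. u x' t) x)"

definition pdT :: "(real \<Rightarrow> real \<Rightarrow> real) \<Rightarrow> real \<Rightarrow> real \<Rightarrow> real" where
  "pdT u = (\<lambda>x t. deriv (\<lambda>t'. u x t') t)"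

fun pds :: "bool list \<Rightarrow> (real \<Rightarrow> real \<Rightarrow> real) \<Rightarrow> real \<Rightarrow> real \<Rightarrow> real" where
  "pds [] u = u"
| "pds (b # bs) u = (if b then pdX else pdT) (pds bs u)"

definition smooth_on2 :: "(real \<times> real) set \<Rightarrow> (real \<Rightarrow> real \<Rightarrow> real) \<Rightarrow> bool" where
  "smooth_on2 S u \<longleftrightarrow>
     (\<forall>ws. \<forall>p\<in>S. (\<lambda>q. pds ws u (fst q) (snd q)) differentiable (at p))"

text \<open>Omega = d gamma - (f dX + g dT) with f, g depending on (gamma, X, T)
  (their dependence on U and its derivatives is already substituted).
  d Omega = 0 mod Omega on the solution amounts to the compatibility condition
  D_T f + f_gamma g = D_X g + g_gamma f for all gamma at all points.\<close>
definition pfaff_compatible ::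
  "(real \<Rightarrow> real \<Rightarrow> real \<Rightarrow> real) \<Rightarrow> (real \<Rightarrow> real \<Rightarrow> real \<Rightarrow> real) \<Rightarrow> (real \<times> real) set \<Rightarrow> bool" where
  "pfaff_compatible f g S \<longleftrightarrow>
     (\<forall>x t. (x, t) \<in> S \<longrightarrow> (\<forall>\<gamma>.
        deriv (\<lambda>t'. f \<gamma> x t') t + deriv (\<lambda>\<gamma>'. f \<gamma>' x t) \<gamma> * g \<gamma> x t
      = deriv (\<lambda>x'. g \<gamma> x' t) x + deriv (\<lambda>\<gamma>'. g \<gamma>' x t) \<gamma> * f \<gamma> x t))"

end

theory Submission
  imports Defs
begin

(* Both sides of the Pfaffian system are quadratic in gamma, so in the compatibility
   condition D_T f + f_gamma g = D_X g + g_gamma f the cubic terms cancel and what remains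
   is a quadratic polynomial in gamma whose three coefficients must vanish. For the
   coefficient of gamma^2 this is an identity, for that of gamma it is the identity
   nu^(5/2) = nu^2 sqrt nu, and the constant coefficient is minus the equation, provided
   U_XXT may be replaced by U_TXX. That exchange is Schwarz's theorem: by the mean value
   theorem and Frechet differentiability of the first partials, the second difference
   U(x+h,t+h) - U(x+h,t) - U(x,t+h) + U(x,t), divided by h^2, tends to U_XT as well as to
   U_TX for h -> 0+. *)

lemma bounded_linear_real_pair:
  fixes D :: "real \<times> real \<Rightarrow> real"
  assumes "bounded_linear D"
  shows "D (a, b) = a * D (1, 0) + b * D (0, 1)"
proof -
  interpret bounded_linear D by fact
  have "(a, b) = a *\<^sub>R (1, 0) + b *\<^sub>R (0, 1)" by simp
  then show ?thesis by (metis add scaleR real_scaleR_def)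
qed

lemma has_derivative_partial_X:
  fixes V :: "real \<Rightarrow> real \<Rightarrow> real"
  assumes "((\<lambda>q. V (fst q) (snd q)) has_derivative D) (at (x, t))"
  shows "((\<lambda>s. V s t) has_real_derivative D (1, 0)) (at x)"
proof -
  have deriv: "((\<lambda>s. V (fst (s, t)) (snd (s, t))) has_derivative (\<lambda>v. D (v, 0))) (at x)"
    by (rule has_derivative_compose[where f = "\<lambda>s. (s, t)", OF _ assms])
      (rule derivative_eq_intros refl)+
  have "D (v, 0) = D (1, 0) * v" for v
    using bounded_linear_real_pair[OF has_derivative_bounded_linear[OF assms], of v 0] by simp
  then have "(\<lambda>v. D (v, 0)) = (\<lambda>v. D (1, 0) * v)" by (rule ext)
  with deriv show ?thesis by (simp add: has_field_derivative_def)
qed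

lemma has_derivative_partial_T:
  fixes V :: "real \<Rightarrow> real \<Rightarrow> real"
  assumes "((\<lambda>q. V (fst q) (snd q)) has_derivative D) (at (x, t))"
  shows "((\<lambda>s. V x s) has_real_derivative D (0, 1)) (at t)"
proof -
  have deriv: "((\<lambda>s. V (fst (x, s)) (snd (x, s))) has_derivative (\<lambda>v. D (0, v))) (at t)"
    by (rule has_derivative_compose[where f = "\<lambda>s. (x, s)", OF _ assms])
      (rule derivative_eq_intros refl)+
  have "D (0, v) = D (0, 1) * v" for v
    using bounded_linear_real_pair[OF has_derivative_bounded_linear[OF assms], of 0 v] by simp
  then have "(\<lambda>v. D (0, v)) = (\<lambda>v. D (0, 1) * v)" by (rule ext)
  with deriv show ?thesis by (simp add: has_field_derivative_def)
qed

lemma has_real_derivative_pdX: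
  assumes "(\<lambda>q. V (fst q) (snd q)) differentiable (at (x, t))"
  shows "((\<lambda>s. V s t) has_real_derivative pdX V x t) (at x)"
proof -
  obtain D where "((\<lambda>q. V (fst q) (snd q)) has_derivative D) (at (x, t))"
    using assms by (auto simp: differentiable_def)
  from has_derivative_partial_X[OF this] show ?thesis
    unfolding pdX_def by (metis DERIV_imp_deriv)
qed

lemma has_real_derivative_pdT:
  assumes "(\<lambda>q. V (fst q) (snd q)) differentiable (at (x, t))"
  shows "((\<lambda>s. V x s) has_real_derivative pdT V x t) (at t)"
proof -
  obtain D where "((\<lambda>q. V (fst q) (snd q)) has_derivative D) (at (x, t))"
    using assms by (auto simp: differentiable_def)
  from has_derivative_partial_T[OF this] show ?thesis
    unfolding pdT_def by (metis DERIV_imp_deriv)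
qed

lemma has_derivative_increment_bound:
  assumes "(F has_derivative D) (at p)" and "e > 0"
  obtains \<delta> where "\<delta> > 0" and "\<And>y z. norm (y - p) < \<delta> \<Longrightarrow> norm (z - p) < \<delta> \<Longrightarrow>
      norm (F y - F z - D (y - z)) \<le> e * (norm (y - p) + norm (z - p))"
proof -
  obtain \<delta> where "\<delta> > 0" and \<delta>: "\<And>y. norm (y - p) < \<delta> \<Longrightarrow>
      norm (F y - F p - D (y - p)) \<le> e * norm (y - p)"
    using assms unfolding has_derivative_at_alt by blast
  show thesis
  proof (rule that[OF \<open>\<delta> > 0\<close>])
    fix y z assume "norm (y - p) < \<delta>" "norm (z - p) < \<delta>"
    interpret bounded_linear D by (rule has_derivative_bounded_linear[OF assms(1)])
    have "D (y - z) = D ((y - p) - (z - p))" by simp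
    also have "\<dots> = D (y - p) - D (z - p)" by (rule diff)
    finally have D_diff: "D (y - z) = D (y - p) - D (z - p)" .
    have "norm (F y - F z - D (y - z))
        = norm ((F y - F p - D (y - p)) - (F z - F p - D (z - p)))"
      unfolding D_diff by (simp add: algebra_simps)
    also have "\<dots> \<le> norm (F y - F p - D (y - p)) + norm (F z - F p - D (z - p))"
      by (rule norm_triangle_ineq4)
    also have "\<dots> \<le> e * (norm (y - p) + norm (z - p))"
      using \<delta>[OF \<open>norm (y - p) < \<delta>\<close>] \<delta>[OF \<open>norm (z - p) < \<delta>\<close>]
      by (simp add: distrib_left)
    finally show "norm (F y - F z - D (y - z)) \<le> e * (norm (y - p) + norm (z - p))" .
  qed
qed

definition second_difference :: "(real \<Rightarrow> real \<Rightarrow> real) \<Rightarrow> real \<Rightarrow> real \<Rightarrow> real \<Rightarrow> real" where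
  "second_difference F x t h = F (x + h) (t + h) - F (x + h) t - F x (t + h) + F x t"

lemma second_difference_transpose:
  "second_difference (\<lambda>a b. F b a) t x h = second_difference F x t h"
  by (simp add: second_difference_def)

lemma second_difference_mean_value:
  fixes F F\<^sub>1 :: "real \<Rightarrow> real \<Rightarrow> real"
  assumes "0 < h"
    and F\<^sub>1: "\<And>s \<tau>. x \<le> s \<Longrightarrow> s \<le> x + h \<Longrightarrow> \<tau> \<in> {t, t + h} \<Longrightarrow>
      ((\<lambda>s. F s \<tau>) has_real_derivative F\<^sub>1 s \<tau>) (at s)"
  obtains \<xi> where "x < \<xi>" "\<xi> < x + h"
    and "second_difference F x t h = h * (F\<^sub>1 \<xi> (t + h) - F\<^sub>1 \<xi> t)"
proof -
  have "((\<lambda>s. F s (t + h) - F s t) has_real_derivative F\<^sub>1 s (t + h) - F\<^sub>1 s t) (at s)"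
    if "x \<le> s" "s \<le> x + h" for s
    using that by (intro derivative_intros F\<^sub>1) auto
  from MVT2[of x "x + h", OF _ this] \<open>0 < h\<close> that show thesis
    by (auto simp: second_difference_def algebra_simps)
qed

lemma second_difference_tendsto:
  fixes F F\<^sub>1 :: "real \<Rightarrow> real \<Rightarrow> real"
  assumes "r > 0"
    and F\<^sub>1: "\<And>s \<tau>. (s, \<tau>) \<in> ball (x, t) r \<Longrightarrow> ((\<lambda>s. F s \<tau>) has_real_derivative F\<^sub>1 s \<tau>) (at s)"
    and D: "((\<lambda>q. F\<^sub>1 (fst q) (snd q)) has_derivative D) (at (x, t))"
  shows "((\<lambda>h. second_difference F x t h / h\<^sup>2) \<longlongrightarrow> D (0, 1)) (at_right 0)"
  unfolding tendsto_iff eventually_at_right_field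
proof (intro allI impI)
  fix e :: real assume "e > 0"
  then have "e/8 > 0" by simp
  with D obtain \<delta> where "\<delta> > 0" and \<delta>: "\<And>y z. norm (y - (x, t)) < \<delta> \<Longrightarrow> norm (z - (x, t)) < \<delta> \<Longrightarrow>
      \<bar>F\<^sub>1 (fst y) (snd y) - F\<^sub>1 (fst z) (snd z) - D (y - z)\<bar>
        \<le> e/8 * (norm (y - (x, t)) + norm (z - (x, t)))"
    by (rule has_derivative_increment_bound) auto
  show "\<exists>b>0. \<forall>h>0. h < b \<longrightarrow> dist (second_difference F x t h / h\<^sup>2) (D (0, 1)) < e"
  proof (intro exI conjI allI impI)
    show "min \<delta> r / 2 > 0" using \<open>\<delta> > 0\<close> \<open>r > 0\<close> by simp
  next
    fix h :: real assume h: "0 < h" "h < min \<delta> r / 2"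
    have near: "norm ((s, \<tau>) - (x, t)) \<le> 2 * h" "norm ((s, \<tau>) - (x, t)) < min \<delta> r"
      if "x \<le> s" "s \<le> x + h" "t \<le> \<tau>" "\<tau> \<le> t + h" for s \<tau>
    proof -
      have "norm ((s, \<tau>) - (x, t)) \<le> norm (s - x) + norm (\<tau> - t)"
        using norm_Pair_le[of "s - x" "\<tau> - t"] by simp
      with that show "norm ((s, \<tau>) - (x, t)) \<le> 2 * h" by simp
      with h show "norm ((s, \<tau>) - (x, t)) < min \<delta> r" by linarith
    qed
    have "((\<lambda>s. F s \<tau>) has_real_derivative F\<^sub>1 s \<tau>) (at s)"
      if "x \<le> s" "s \<le> x + h" "\<tau> \<in> {t, t + h}" for s \<tau>
      using near(2)[of s \<tau>] that h by (intro F\<^sub>1) (auto simp: dist_commute dist_norm)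
    from second_difference_mean_value[OF h(1) this] obtain \<xi> where \<xi>: "x < \<xi>" "\<xi> < x + h"
      and mvt: "second_difference F x t h = h * (F\<^sub>1 \<xi> (t + h) - F\<^sub>1 \<xi> t)" .
    have "D ((\<xi>, t + h) - (\<xi>, t)) = h * D (0, 1)"
      using bounded_linear_real_pair[OF has_derivative_bounded_linear[OF D], of 0 h] by simp
    then have "\<bar>F\<^sub>1 \<xi> (t + h) - F\<^sub>1 \<xi> t - h * D (0, 1)\<bar>
        \<le> e/8 * (norm ((\<xi>, t + h) - (x, t)) + norm ((\<xi>, t) - (x, t)))"
      using \<delta>[of "(\<xi>, t + h)" "(\<xi>, t)"] near(2)[of \<xi> "t + h"] near(2)[of \<xi> t] \<xi> h by simp
    also have "\<dots> \<le> e/8 * (2 * h + 2 * h)"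
      using near(1)[of \<xi> "t + h"] near(1)[of \<xi> t] \<xi> h \<open>e > 0\<close>
      by (intro mult_left_mono add_mono) auto
    finally have "\<bar>F\<^sub>1 \<xi> (t + h) - F\<^sub>1 \<xi> t - h * D (0, 1)\<bar> < e * h"
      using mult_pos_pos[OF \<open>e > 0\<close> h(1)] by simp
    moreover have "second_difference F x t h / h\<^sup>2 - D (0, 1)
        = (F\<^sub>1 \<xi> (t + h) - F\<^sub>1 \<xi> t - h * D (0, 1)) / h"
      using mvt h by (simp add: field_simps power2_eq_square)
    ultimately show "dist (second_difference F x t h / h\<^sup>2) (D (0, 1)) < e"
      using h by (simp add: dist_real_def abs_divide pos_divide_less_eq)
  qed
qed

lemma has_derivative_transpose:
  fixes W :: "real \<Rightarrow> real \<Rightarrow> real"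
  assumes "((\<lambda>q. W (fst q) (snd q)) has_derivative D) (at (x, t))"
  shows "((\<lambda>q. W (snd q) (fst q)) has_derivative (\<lambda>v. D (snd v, fst v))) (at (t, x))"
proof -
  have "((\<lambda>q. W (fst q) (snd q)) has_derivative D) (at (snd (t, x), fst (t, x)))"
    using assms by simp
  from has_derivative_compose[where f = "\<lambda>q. (snd q, fst q)", OF _ this] show ?thesis
    by (simp add: has_derivative_snd has_derivative_fst has_derivative_Pair)
qed

lemma pdT_pdX_eq_pdX_pdT:
  fixes V :: "real \<Rightarrow> real \<Rightarrow> real"
  assumes "open S" "(x, t) \<in> S"
    and V: "\<And>p. p \<in> S \<Longrightarrow> (\<lambda>q. V (fst q) (snd q)) differentiable (at p)"
    and "(\<lambda>q. pdX V (fst q) (snd q)) differentiable (at (x, t))"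
    and "(\<lambda>q. pdT V (fst q) (snd q)) differentiable (at (x, t))"
  shows "pdT (pdX V) x t = pdX (pdT V) x t"
proof -
  obtain DX DT where
    DX: "((\<lambda>q. pdX V (fst q) (snd q)) has_derivative DX) (at (x, t))" and
    DT: "((\<lambda>q. pdT V (fst q) (snd q)) has_derivative DT) (at (x, t))"
    using assms(4,5) by (auto simp: differentiable_def)
  obtain r where "r > 0" and r: "ball (x, t) r \<subseteq> S"
    using assms(1,2) open_contains_ball by blast
  have "((\<lambda>s. V s \<tau>) has_real_derivative pdX V s \<tau>) (at s)"
    if "(s, \<tau>) \<in> ball (x, t) r" for s \<tau>
    using that r by (intro has_real_derivative_pdX V) auto
  from second_difference_tendsto[OF \<open>r > 0\<close> this DX]
  have "((\<lambda>h. second_difference V x t h / h\<^sup>2) \<longlongrightarrow> DX (0, 1)) (at_right 0)" .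
  moreover have "((\<lambda>s. V \<tau> s) has_real_derivative pdT V \<tau> s) (at s)"
    if "(s, \<tau>) \<in> ball (t, x) r" for s \<tau>
    using that r by (intro has_real_derivative_pdT V) (auto simp: dist_Pair_Pair add.commute)
  from second_difference_tendsto[where F = "\<lambda>a b. V b a" and F\<^sub>1 = "\<lambda>a b. pdT V b a",
      OF \<open>r > 0\<close> this has_derivative_transpose[OF DT]]
  have "((\<lambda>h. second_difference V x t h / h\<^sup>2) \<longlongrightarrow> DT (1, 0)) (at_right 0)"
    by (simp add: second_difference_transpose[of V])
  ultimately have "DX (0, 1) = DT (1, 0)"
    by (rule tendsto_unique[OF trivial_limit_at_right_real])
  moreover have "pdT (pdX V) x t = DX (0, 1)"
    using has_derivative_partial_T[OF DX] unfolding pdT_def by (metis DERIV_imp_deriv)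
  moreover have "pdX (pdT V) x t = DT (1, 0)"
    using has_derivative_partial_X[OF DT] unfolding pdX_def by (metis DERIV_imp_deriv)
  ultimately show ?thesis by simp
qed

lemma pds_append: "pds (ws @ vs) V = pds ws (pds vs V)"
  by (induction ws) auto

lemma smooth_on2_differentiable:
  "smooth_on2 S V \<Longrightarrow> p \<in> S \<Longrightarrow> (\<lambda>q. V (fst q) (snd q)) differentiable (at p)"
  unfolding smooth_on2_def using pds.simps(1) by metis

lemma smooth_on2_pds: "smooth_on2 S V \<Longrightarrow> smooth_on2 S (pds vs V)"
  unfolding smooth_on2_def pds_append[symmetric] by blast

lemma smooth_on2_pdX: "smooth_on2 S V \<Longrightarrow> smooth_on2 S (pdX V)"
  using smooth_on2_pds[of S V "[True]"] by simp

lemma smooth_on2_pdT: "smooth_on2 S V \<Longrightarrow> smooth_on2 S (pdT V)"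
  using smooth_on2_pds[of S V "[False]"] by simp

lemma smooth_on2_has_pdX:
  "smooth_on2 S V \<Longrightarrow> (x, t) \<in> S \<Longrightarrow> ((\<lambda>s. V s t) has_real_derivative pdX V x t) (at x)"
  by (rule has_real_derivative_pdX[OF smooth_on2_differentiable])

lemma smooth_on2_has_pdT:
  "smooth_on2 S V \<Longrightarrow> (x, t) \<in> S \<Longrightarrow> ((\<lambda>s. V x s) has_real_derivative pdT V x t) (at t)"
  by (rule has_real_derivative_pdT[OF smooth_on2_differentiable])

lemma smooth_on2_pdT_pdX:
  assumes "open S" "smooth_on2 S V" "(x, t) \<in> S"
  shows "pdT (pdX V) x t = pdX (pdT V) x t"
proof (rule pdT_pdX_eq_pdX_pdT[OF assms(1,3)])
  show "(\<lambda>q. V (fst q) (snd q)) differentiable (at p)" if "p \<in> S" for p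
    using smooth_on2_differentiable[OF assms(2) that] .
  show "(\<lambda>q. pdX V (fst q) (snd q)) differentiable (at (x, t))"
    using smooth_on2_differentiable[OF smooth_on2_pdX[OF assms(2)] assms(3)] .
  show "(\<lambda>q. pdT V (fst q) (snd q)) differentiable (at (x, t))"
    using smooth_on2_differentiable[OF smooth_on2_pdT[OF assms(2)] assms(3)] .
qed

lemma pdX_cong_open:
  assumes "open S" "(x, t) \<in> S" and eq: "\<And>x t. (x, t) \<in> S \<Longrightarrow> V x t = W x t"
  shows "pdX V x t = pdX W x t"
proof -
  have "open ((\<lambda>s. (s, t)) -` S)"
    using \<open>open S\<close> by (intro open_vimage continuous_intros)
  then have "eventually (\<lambda>s. V s t = W s t) (nhds x)"
    unfolding eventually_nhds using assms(2) eq by auto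
  then show ?thesis
    unfolding pdX_def by (rule deriv_cong_ev) simp
qed

lemma smooth_on2_pdT_pdX_pdX:
  assumes "open S" "smooth_on2 S V" "(x, t) \<in> S"
  shows "pdT (pdX (pdX V)) x t = pdX (pdX (pdT V)) x t"
proof -
  have "pdT (pdX (pdX V)) x t = pdX (pdT (pdX V)) x t"
    using smooth_on2_pdT_pdX[OF assms(1) smooth_on2_pdX[OF assms(2)] assms(3)] .
  also have "\<dots> = pdX (pdX (pdT V)) x t"
    using smooth_on2_pdT_pdX[OF assms(1,2)] by (rule pdX_cong_open[OF assms(1,3)])
  finally show ?thesis .
qed

lemma pfaff_compatible_quadraticI:
  fixes a\<^sub>2 a\<^sub>1 a\<^sub>0 b\<^sub>2 b\<^sub>1 b\<^sub>0 a\<^sub>2' a\<^sub>1' a\<^sub>0' b\<^sub>2' b\<^sub>1' b\<^sub>0' :: "real \<Rightarrow> real \<Rightarrow> real"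
  assumes f: "\<And>\<gamma> x t. f \<gamma> x t = a\<^sub>2 x t * \<gamma>\<^sup>2 + a\<^sub>1 x t * \<gamma> + a\<^sub>0 x t"
    and g: "\<And>\<gamma> x t. g \<gamma> x t = b\<^sub>2 x t * \<gamma>\<^sup>2 + b\<^sub>1 x t * \<gamma> + b\<^sub>0 x t"
    and a\<^sub>2': "\<And>x t. (x, t) \<in> S \<Longrightarrow> ((\<lambda>t. a\<^sub>2 x t) has_real_derivative a\<^sub>2' x t) (at t)"
    and a\<^sub>1': "\<And>x t. (x, t) \<in> S \<Longrightarrow> ((\<lambda>t. a\<^sub>1 x t) has_real_derivative a\<^sub>1' x t) (at t)"
    and a\<^sub>0': "\<And>x t. (x, t) \<in> S \<Longrightarrow> ((\<lambda>t. a\<^sub>0 x t) has_real_derivative a\<^sub>0' x t) (at t)"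
    and b\<^sub>2': "\<And>x t. (x, t) \<in> S \<Longrightarrow> ((\<lambda>x. b\<^sub>2 x t) has_real_derivative b\<^sub>2' x t) (at x)"
    and b\<^sub>1': "\<And>x t. (x, t) \<in> S \<Longrightarrow> ((\<lambda>x. b\<^sub>1 x t) has_real_derivative b\<^sub>1' x t) (at x)"
    and b\<^sub>0': "\<And>x t. (x, t) \<in> S \<Longrightarrow> ((\<lambda>x. b\<^sub>0 x t) has_real_derivative b\<^sub>0' x t) (at x)"
    and coeff\<^sub>2: "\<And>x t. (x, t) \<in> S \<Longrightarrow>
      a\<^sub>2' x t - b\<^sub>2' x t + a\<^sub>2 x t * b\<^sub>1 x t - a\<^sub>1 x t * b\<^sub>2 x t = 0"
    and coeff\<^sub>1: "\<And>x t. (x, t) \<in> S \<Longrightarrow>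
      a\<^sub>1' x t - b\<^sub>1' x t + 2 * (a\<^sub>2 x t * b\<^sub>0 x t - a\<^sub>0 x t * b\<^sub>2 x t) = 0"
    and coeff\<^sub>0: "\<And>x t. (x, t) \<in> S \<Longrightarrow>
      a\<^sub>0' x t - b\<^sub>0' x t + a\<^sub>1 x t * b\<^sub>0 x t - a\<^sub>0 x t * b\<^sub>1 x t = 0"
  shows "pfaff_compatible f g S"
  unfolding pfaff_compatible_def
proof (intro allI impI)
  fix x t \<gamma> assume xt: "(x, t) \<in> S"
  have "deriv (\<lambda>t'. f \<gamma> x t') t = a\<^sub>2' x t * \<gamma>\<^sup>2 + a\<^sub>1' x t * \<gamma> + a\<^sub>0' x t"
    unfolding f using a\<^sub>2'[OF xt] a\<^sub>1'[OF xt] a\<^sub>0'[OF xt]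
    by (auto intro!: DERIV_imp_deriv derivative_eq_intros)
  moreover have "deriv (\<lambda>\<gamma>'. f \<gamma>' x t) \<gamma> = 2 * a\<^sub>2 x t * \<gamma> + a\<^sub>1 x t"
    unfolding f by (rule DERIV_imp_deriv) (rule derivative_eq_intros refl | simp)+
  moreover have "deriv (\<lambda>x'. g \<gamma> x' t) x = b\<^sub>2' x t * \<gamma>\<^sup>2 + b\<^sub>1' x t * \<gamma> + b\<^sub>0' x t"
    unfolding g using b\<^sub>2'[OF xt] b\<^sub>1'[OF xt] b\<^sub>0'[OF xt]
    by (auto intro!: DERIV_imp_deriv derivative_eq_intros)
  moreover have "deriv (\<lambda>\<gamma>'. g \<gamma>' x t) \<gamma> = 2 * b\<^sub>2 x t * \<gamma> + b\<^sub>1 x t"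
    unfolding g by (rule DERIV_imp_deriv) (rule derivative_eq_intros refl | simp)+
  moreover note coeff\<^sub>2[OF xt] coeff\<^sub>1[OF xt] coeff\<^sub>0[OF xt]
  ultimately show "deriv (\<lambda>t'. f \<gamma> x t') t + deriv (\<lambda>\<gamma>'. f \<gamma>' x t) \<gamma> * g \<gamma> x t
      = deriv (\<lambda>x'. g \<gamma> x' t) x + deriv (\<lambda>\<gamma>'. g \<gamma>' x t) \<gamma> * f \<gamma> x t"
    unfolding f g by algebra
qed

lemma powr_five_halves:
  assumes "0 \<le> (x::real)" shows "x powr (5/2) = x^2 * sqrt x"
proof (cases "x = 0")
  case False
  have "x powr (5/2) = x powr 2 * x powr (1/2)" by (simp flip: powr_add)
  with assms False show ?thesis by (simp add: powr_half_sqrt)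
qed simp

theorem corollary3:
  fixes \<nu> \<epsilon> \<zeta> :: real and U :: "real \<Rightarrow> real \<Rightarrow> real" and S :: "(real \<times> real) set"
  assumes "\<nu> \<ge> 0" and "\<epsilon> = 0 \<or> \<epsilon> = 1" and "1 + \<zeta> * \<nu>^2 \<noteq> 0"
    and "open S" and "smooth_on2 S U"
    and "\<forall>x t. (x, t) \<in> S \<longrightarrow>
      - 2 * \<nu>^2 * pdX U x t * pdX (pdX U) x t + 3 * \<epsilon> * pdX U x t * U x t
      - \<nu>^2 * pdX (pdX (pdX U)) x t * U x t + 2/3 * pdX (pdX (pdX U)) x t
      - 2/3 * \<nu> powr (5/2) * pdX (pdX (pdX U)) x t + \<epsilon> * pdT U x t
      - \<nu>^2 * pdX (pdX (pdT U)) x t = 0"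
  shows "pfaff_compatible
     (\<lambda>\<gamma> x t. - (3 / (4 * (1 + \<zeta> * \<nu>^2)) * \<gamma>^2
        - (\<nu>^2 * pdX (pdX U) x t - \<epsilon> * U x t + 1/3 * \<epsilon> * (\<zeta> + sqrt \<nu>))))
     (\<lambda>\<gamma> x t. - (1 / (2 * (1 + \<zeta> * \<nu>^2)) * (- 3/2 * U x t - \<zeta> - sqrt \<nu>) * \<gamma>^2
        + pdX U x t * \<gamma> + U x t * (\<nu>^2 * pdX (pdX U) x t - \<epsilon> * U x t)
        + 2/3 * (\<nu> powr (5/2) - 1) * pdX (pdX U) x t
        - 1/3 * \<epsilon> * (\<zeta> + sqrt \<nu>) * U x t
        + 2/9 * \<epsilon> * (\<zeta>^2 + 2 * sqrt \<nu> * \<zeta> + \<nu>)))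
     S"
proof -
  define c where "c = 1 + \<zeta> * \<nu>^2"
  define \<sigma> where "\<sigma> = \<zeta> + sqrt \<nu>"
  have "c \<noteq> 0" using assms(3) by (simp add: c_def)
  have \<nu>_powr: "\<nu> powr (5/2) = \<nu>^2 * sqrt \<nu>" using assms(1) by (rule powr_five_halves)
  note smooth_U_XX = smooth_on2_pdX[OF smooth_on2_pdX[OF assms(5)]]
  note X_derivatives = smooth_on2_has_pdX[OF assms(5)]
    smooth_on2_has_pdX[OF smooth_on2_pdX[OF assms(5)]] smooth_on2_has_pdX[OF smooth_U_XX]
  note T_derivatives = smooth_on2_has_pdT[OF assms(5)] smooth_on2_has_pdT[OF smooth_U_XX]
  have pde: "- 2 * \<nu>^2 * pdX U x t * pdX (pdX U) x t + 3 * \<epsilon> * pdX U x t * U x t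
      - \<nu>^2 * pdX (pdX (pdX U)) x t * U x t + 2/3 * pdX (pdX (pdX U)) x t
      - 2/3 * \<nu> powr (5/2) * pdX (pdX (pdX U)) x t + \<epsilon> * pdT U x t
      - \<nu>^2 * pdT (pdX (pdX U)) x t = 0" if "(x, t) \<in> S" for x t
    using assms(6) that smooth_on2_pdT_pdX_pdX[OF assms(4,5) that] by simp
  show ?thesis
    apply (rule pfaff_compatible_quadraticI[where
          a\<^sub>2 = "\<lambda>x t. - 3 / (4 * c)" and a\<^sub>1 = "\<lambda>x t. 0"
      and a\<^sub>0 = "\<lambda>x t. \<nu>^2 * pdX (pdX U) x t - \<epsilon> * U x t + \<epsilon> * \<sigma> / 3"
      and b\<^sub>2 = "\<lambda>x t. (3/2 * U x t + \<sigma>) / (2 * c)" and b\<^sub>1 = "\<lambda>x t. - pdX U x t"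
      and b\<^sub>0 = "\<lambda>x t. - (U x t * (\<nu>^2 * pdX (pdX U) x t - \<epsilon> * U x t)
        + 2/3 * (\<nu> powr (5/2) - 1) * pdX (pdX U) x t - \<epsilon> * \<sigma> * U x t / 3 + 2/9 * \<epsilon> * \<sigma>^2)"
      and a\<^sub>2' = "\<lambda>x t. 0" and a\<^sub>1' = "\<lambda>x t. 0"
      and a\<^sub>0' = "\<lambda>x t. \<nu>^2 * pdT (pdX (pdX U)) x t - \<epsilon> * pdT U x t"
      and b\<^sub>2' = "\<lambda>x t. 3 * pdX U x t / (4 * c)" and b\<^sub>1' = "\<lambda>x t. - pdX (pdX U) x t"
      and b\<^sub>0' = "\<lambda>x t. - (pdX U x t * (\<nu>^2 * pdX (pdX U) x t - \<epsilon> * U x t)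
        + U x t * (\<nu>^2 * pdX (pdX (pdX U)) x t - \<epsilon> * pdX U x t)
        + 2/3 * (\<nu> powr (5/2) - 1) * pdX (pdX (pdX U)) x t - \<epsilon> * \<sigma> * pdX U x t / 3)"])
      subgoal by (simp add: c_def \<sigma>_def)
      subgoal using assms(1,3) by (simp add: c_def \<sigma>_def field_simps power2_eq_square)
      subgoal by simp
      subgoal by simp
      subgoal by (auto intro!: derivative_eq_intros T_derivatives)
      subgoal using \<open>c \<noteq> 0\<close> by (auto intro!: derivative_eq_intros X_derivatives)
      subgoal by (auto intro!: derivative_eq_intros X_derivatives)
      subgoal by (auto intro!: derivative_eq_intros X_derivatives simp: algebra_simps)
      subgoal by simp
      subgoal using \<open>c \<noteq> 0\<close>
        by (simp add: field_simps) (unfold c_def \<sigma>_def \<nu>_powr, algebra)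
      subgoal using pde by (simp add: algebra_simps \<nu>_powr)
      done
qed

end
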